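(* Let $f:\mathbb{R}\to\mathbb{R}$ be integrable with respect to every Gaussian measure on $\mathbb{R}$. Let $x\in\Lambda$ and $P_x(\phi)=\phi_x$. Then for all $\rho>0$ and $m\in(-\sqrt\rho,\sqrt\rho)$, \[ \langle f\circ P_x\rangle_{\mathrm{MC}}^{m,\rho;N}=O(1)\quad(N\to\infty). \]
   Context: $\Lambda$ is a finite lattice with $N=|\Lambda|$ sites, fields $\phi\in\mathbb{R}^\Lambda$. $\mu_{\mathrm{MC}}^{m,\rho;N}$ is the normalized uniform surface measure on the $(N-2)$-sphere $\{\sum_x\phi_x=mN,\ \sum_x\phi_x^2=\rho N\}$. *)

theory Defs
  imports "HOL-Probability.Probability" "HOL-Library.Landau_Symbols"
begin

definition gaussian_measure :: "real \<Rightarrow> real \<Rightarrow> real measure" where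
  "gaussian_measure mu sd = density lborel (normal_density mu sd)"

definition std_gauss_field :: "'a set \<Rightarrow> ('a \<Rightarrow> real) measure" where
  "std_gauss_field Lam = PiM Lam (\<lambda>_. gaussian_measure 0 1)"

text \<open>Microcanonical measure: normalized uniform surface measure on the (N-2)-sphere
  {phi. sum phi = m N, sum phi^2 = rho N}, N = card Lam.  It is realized as the law of
  c + r (g - mean g)/|g - mean g| for a standard Gaussian field g, where c = (m,...,m) is the
  centre and r = sqrt (N (rho - m^2)) the radius of the sphere (rotation invariance of the
  Gaussian within the hyperplane orthogonal to (1,...,1)).\<close>
definition mc_measure :: "'a set \<Rightarrow> real \<Rightarrow> real \<Rightarrow> ('a \<Rightarrow> real) measure" where
  "mc_measure Lam m rho =
     distr (std_gauss_field Lam) (PiM Lam (\<lambda>_. borel))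
       (\<lambda>g. let N = real (card Lam);
                a = (\<Sum>y\<in>Lam. g y) / N;
                s = sqrt (\<Sum>y\<in>Lam. (g y - a)\<^sup>2)
            in (\<lambda>y\<in>Lam. m + sqrt (N * (rho - m\<^sup>2)) * (g y - a) / s))"

end

theory Submission
  imports Defs
begin

text \<open>
  Write \<Lambda> = insert x L with card L = n, and let b and Q be the sample mean and the sum of
  squared deviations of the Gaussian field on L. If t is the value of the field at x, the
  microcanonical coordinate is \<phi> x = m + \<theta> ((t - b) / sqrt Q) with
  \<theta> w = R c w / sqrt (1 + c w^2), c = n / (n + 1) and R = sqrt ((n + 1) (rho - m^2)).
  Integrating t out first and substituting t = b + sqrt Q w leaves the average over the field on
  L of sqrt Q times the standard normal density at b + sqrt Q w. A pointwise bound turns it into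
  a Gaussian integral of an exponential quadratic form, which the Hubbard-Stratonovich identity
  evaluates exactly: up to a bounded factor it is the Student-type profile
  (1 + w^2/2 - 1/(2n))^(-(n-1)/2). For n \<ge> 6 this is dominated by
  4 / sqrt (rho - m^2) \<theta>' w exp (- (\<theta> w)^2 / (16 (rho - m^2))), and the change of
  variables u = \<theta> w bounds the average of |f (\<phi> x)| by a Gaussian integral of |f| that
  does not depend on N.
\<close>

section \<open>Gaussian integrals\<close>

abbreviation std_gaussian :: "real measure" where
  "std_gaussian \<equiv> gaussian_measure 0 1"

lemma prob_space_gaussian_measure: "sd > 0 \<Longrightarrow> prob_space (gaussian_measure mu sd)"
  unfolding gaussian_measure_def by (rule prob_space_normal_density)

lemma sets_gaussian_measure [measurable_cong, simp]: "sets (gaussian_measure mu sd) = sets borel"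
  unfolding gaussian_measure_def by simp

lemma space_gaussian_measure [simp]: "space (gaussian_measure mu sd) = UNIV"
  unfolding gaussian_measure_def by simp

lemma nn_integral_gaussian_measure:
  assumes "h \<in> borel_measurable borel"
  shows "(\<integral>\<^sup>+t. h t \<partial>gaussian_measure mu sd) = (\<integral>\<^sup>+t. ennreal (normal_density mu sd t) * h t \<partial>lborel)"
  unfolding gaussian_measure_def using assms by (subst nn_integral_density) auto

lemma borel_measurable_if_integrable_gaussian:
  "integrable (gaussian_measure mu sd) f \<Longrightarrow> f \<in> borel_measurable borel"
  using borel_measurable_integrable measurable_cong_sets[OF sets_gaussian_measure refl] by blast

lemma emeasure_gaussian_measure_singleton: "emeasure (gaussian_measure mu sd) {c} = 0"
proof -
  have "emeasure (gaussian_measure mu sd) {c} = (\<integral>\<^sup>+t. ennreal (normal_density mu sd t) * indicator {c} t \<partial>lborel)"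
    unfolding gaussian_measure_def by (rule emeasure_density) auto
  also have "\<dots> = 0" by (rule nn_integral_null_set) (auto simp: null_sets_def)
  finally show ?thesis .
qed

lemma product_sigma_finite_std_gaussian: "product_sigma_finite (\<lambda>_. std_gaussian)"
  unfolding product_sigma_finite_def
  by (simp add: prob_space_imp_sigma_finite prob_space_gaussian_measure)

lemma prob_space_std_gauss_field: "prob_space (std_gauss_field L)"
  unfolding std_gauss_field_def by (rule prob_space_PiM) (simp add: prob_space_gaussian_measure)

lemma sets_std_gauss_field [measurable_cong]: "sets (std_gauss_field L) = sets (PiM L (\<lambda>_. borel))"
  unfolding std_gauss_field_def by (rule sets_PiM_cong) simp_all

lemma nn_integral_lborel_exp_quadratic:
  fixes a b :: real
  assumes a: "a > 0"
  shows "(\<integral>\<^sup>+t. ennreal (exp (b * t - a * t\<^sup>2 / 2)) \<partial>lborel)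
       = ennreal (sqrt (2 * pi / a) * exp (b\<^sup>2 / (2 * a)))"
proof -
  define C where "C = sqrt (2 * pi / a) * exp (b\<^sup>2 / (2 * a))"
  have C: "C \<ge> 0" unfolding C_def using a by simp
  have "exp (b * t - a * t\<^sup>2 / 2) = C * normal_density (b / a) (1 / sqrt a) t" for t
  proof -
    have "- (t - b / a)\<^sup>2 / (2 * (1 / sqrt a)\<^sup>2) = b * t - a * t\<^sup>2 / 2 - b\<^sup>2 / (2 * a)"
      using a by (simp add: power_divide field_simps power2_eq_square)
    then have "normal_density (b / a) (1 / sqrt a) t = exp (b * t - a * t\<^sup>2 / 2 - b\<^sup>2 / (2 * a)) / sqrt (2 * pi / a)"
      using a by (simp add: normal_density_def power_divide)
    then show ?thesis
      using a by (simp add: C_def exp_diff)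
  qed
  then have "(\<integral>\<^sup>+t. ennreal (exp (b * t - a * t\<^sup>2 / 2)) \<partial>lborel)
      = (\<integral>\<^sup>+t. ennreal C * ennreal (normal_density (b / a) (1 / sqrt a) t) \<partial>lborel)"
    using C by (simp add: ennreal_mult)
  also have "\<dots> = ennreal C * (\<integral>\<^sup>+t. ennreal (normal_density (b / a) (1 / sqrt a) t) \<partial>lborel)"
    by (rule nn_integral_cmult) simp
  also have "(\<integral>\<^sup>+t. ennreal (normal_density (b / a) (1 / sqrt a) t) \<partial>lborel) = 1"
    using a by (subst nn_integral_eq_integral) auto
  finally show ?thesis by (simp add: C_def)
qed

lemma nn_integral_std_gaussian_exp_quadratic:
  fixes mu b :: real
  assumes pos: "1 + 2 * mu > 0"
  shows "(\<integral>\<^sup>+t. ennreal (exp (- mu * t\<^sup>2 + b * t)) \<partial>std_gaussian)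
       = ennreal (1 / sqrt (1 + 2 * mu) * exp (b\<^sup>2 / (2 * (1 + 2 * mu))))"
proof -
  have "normal_density 0 1 t * exp (- mu * t\<^sup>2 + b * t)
      = 1 / sqrt (2 * pi) * exp (b * t - (1 + 2 * mu) * t\<^sup>2 / 2)" for t
    by (simp add: std_normal_density_def mult_exp_exp algebra_simps)
  then have "(\<integral>\<^sup>+t. ennreal (exp (- mu * t\<^sup>2 + b * t)) \<partial>std_gaussian)
      = (\<integral>\<^sup>+t. ennreal (1 / sqrt (2 * pi)) * ennreal (exp (b * t - (1 + 2 * mu) * t\<^sup>2 / 2)) \<partial>lborel)"
    by (simp add: nn_integral_gaussian_measure ennreal_mult[symmetric])
  also have "\<dots> = ennreal (1 / sqrt (2 * pi)) * (\<integral>\<^sup>+t. ennreal (exp (b * t - (1 + 2 * mu) * t\<^sup>2 / 2)) \<partial>lborel)"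
    by (rule nn_integral_cmult) simp
  also have "\<dots> = ennreal (1 / sqrt (2 * pi) * (sqrt (2 * pi / (1 + 2 * mu)) * exp (b\<^sup>2 / (2 * (1 + 2 * mu)))))"
    using pos by (simp add: nn_integral_lborel_exp_quadratic ennreal_mult[symmetric])
  finally show ?thesis
    using pos by (simp add: real_sqrt_divide)
qed

lemma nn_integral_gaussian_weight_finite:
  fixes f :: "real \<Rightarrow> real"
  assumes sd: "sd > 0" and f: "integrable (gaussian_measure m sd) f"
  shows "(\<integral>\<^sup>+u. ennreal \<bar>f (m + u)\<bar> * ennreal (exp (- u\<^sup>2 / (2 * sd\<^sup>2))) \<partial>lborel) < \<infinity>"
proof -
  note [measurable] = borel_measurable_if_integrable_gaussian[OF f]
  have "(\<integral>\<^sup>+u. ennreal \<bar>f (m + u)\<bar> * ennreal (exp (- u\<^sup>2 / (2 * sd\<^sup>2))) \<partial>lborel)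
      = (\<integral>\<^sup>+t. ennreal \<bar>f t\<bar> * ennreal (exp (- (t - m)\<^sup>2 / (2 * sd\<^sup>2))) \<partial>lborel)"
    by (subst nn_integral_real_affine[where c = 1 and t = m]) simp_all
  also have "\<dots> = ennreal (sqrt (2 * pi * sd\<^sup>2)) * (\<integral>\<^sup>+t. ennreal \<bar>f t\<bar> \<partial>gaussian_measure m sd)"
  proof -
    have "exp (- (t - m)\<^sup>2 / (2 * sd\<^sup>2)) = sqrt (2 * pi * sd\<^sup>2) * normal_density m sd t" for t
      using sd by (simp add: normal_density_def)
    then show ?thesis
      by (subst nn_integral_cmult[symmetric])
        (auto simp: nn_integral_gaussian_measure ennreal_mult mult_ac intro!: nn_integral_cong)
  qed
  also have "\<dots> < \<infinity>"
    using f by (simp add: integrable_iff_bounded ennreal_mult_less_top)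
  finally show ?thesis .
qed

lemma exp_square_eq_nn_integral_std_gaussian:
  fixes c S :: real
  assumes c: "c \<ge> 0"
  shows "ennreal (exp (c * S\<^sup>2)) = (\<integral>\<^sup>+z. ennreal (exp (sqrt (2 * c) * S * z)) \<partial>std_gaussian)"
  using nn_integral_std_gaussian_exp_quadratic[of 0 "sqrt (2 * c) * S"] c
  by (simp add: power_mult_distrib)

lemma nn_integral_std_gauss_field_exp_sum:
  fixes mu b :: real
  assumes fin: "finite L" and pos: "1 + 2 * mu > 0"
  shows "(\<integral>\<^sup>+g. ennreal (exp (\<Sum>i\<in>L. - mu * (g i)\<^sup>2 + b * g i)) \<partial>std_gauss_field L)
       = ennreal ((1 / sqrt (1 + 2 * mu) * exp (b\<^sup>2 / (2 * (1 + 2 * mu)))) ^ card L)"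
proof -
  interpret product_sigma_finite "\<lambda>_. std_gaussian"
    by (rule product_sigma_finite_std_gaussian)
  have "(\<integral>\<^sup>+g. ennreal (exp (\<Sum>i\<in>L. - mu * (g i)\<^sup>2 + b * g i)) \<partial>std_gauss_field L)
      = (\<integral>\<^sup>+g. (\<Prod>i\<in>L. ennreal (exp (- mu * (g i)\<^sup>2 + b * g i))) \<partial>PiM L (\<lambda>_. std_gaussian))"
    using fin by (simp add: std_gauss_field_def exp_sum prod_ennreal)
  also have "\<dots> = (\<Prod>i\<in>L. \<integral>\<^sup>+t. ennreal (exp (- mu * t\<^sup>2 + b * t)) \<partial>std_gaussian)"
    by (rule product_nn_integral_prod) (use fin in auto)
  also have "\<dots> = (\<Prod>i\<in>L. ennreal (1 / sqrt (1 + 2 * mu) * exp (b\<^sup>2 / (2 * (1 + 2 * mu)))))"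
    by (simp only: nn_integral_std_gaussian_exp_quadratic[OF pos])
  also have "\<dots> = ennreal ((1 / sqrt (1 + 2 * mu) * exp (b\<^sup>2 / (2 * (1 + 2 * mu)))) ^ card L)"
    using pos by (simp add: ennreal_power)
  finally show ?thesis .
qed

lemma exp_quadratic_form_eq_nn_integral_std_gaussian:
  fixes mu mu' :: real and n :: nat and g :: "'a \<Rightarrow> real"
  assumes mu': "mu' \<ge> 0"
  shows "ennreal (exp (- mu * (\<Sum>i\<in>L. (g i)\<^sup>2) + mu' * (\<Sum>i\<in>L. g i)\<^sup>2 / n))
       = (\<integral>\<^sup>+z. ennreal (exp (\<Sum>i\<in>L. - mu * (g i)\<^sup>2 + (sqrt (2 * (mu' / n)) * z) * g i)) \<partial>std_gaussian)"
proof -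
  define \<alpha> where "\<alpha> = sqrt (2 * (mu' / n))"
  have "ennreal (exp (- mu * (\<Sum>i\<in>L. (g i)\<^sup>2) + mu' * (\<Sum>i\<in>L. g i)\<^sup>2 / n))
      = ennreal (exp (- mu * (\<Sum>i\<in>L. (g i)\<^sup>2))) * ennreal (exp (mu' / n * (\<Sum>i\<in>L. g i)\<^sup>2))"
    by (simp add: ennreal_mult[symmetric] mult_exp_exp algebra_simps)
  also have "ennreal (exp (mu' / n * (\<Sum>i\<in>L. g i)\<^sup>2))
      = (\<integral>\<^sup>+z. ennreal (exp (\<alpha> * (\<Sum>i\<in>L. g i) * z)) \<partial>std_gaussian)"
    unfolding \<alpha>_def using mu' by (intro exp_square_eq_nn_integral_std_gaussian) simp
  also have "ennreal (exp (- mu * (\<Sum>i\<in>L. (g i)\<^sup>2))) * \<dots>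
      = (\<integral>\<^sup>+z. ennreal (exp (- mu * (\<Sum>i\<in>L. (g i)\<^sup>2))) * ennreal (exp (\<alpha> * (\<Sum>i\<in>L. g i) * z)) \<partial>std_gaussian)"
    by (rule nn_integral_cmult[symmetric]) simp
  also have "\<dots> = (\<integral>\<^sup>+z. ennreal (exp (\<Sum>i\<in>L. - mu * (g i)\<^sup>2 + (\<alpha> * z) * g i)) \<partial>std_gaussian)"
    by (intro nn_integral_cong)
      (simp add: ennreal_mult[symmetric] exp_add[symmetric] sum.distrib sum_distrib_left
        sum_subtractf sum_negf mult_ac)
  finally show ?thesis unfolding \<alpha>_def .
qed

lemma nn_integral_std_gauss_field_exp_quadratic_form:
  fixes mu mu' :: real and n :: nat
  assumes fin: "finite L" and n: "card L = n" "n > 0"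
    and pos: "1 + 2 * mu > 0" and mu': "mu' \<ge> 0" "2 * mu' < 1 + 2 * mu"
  shows "(\<integral>\<^sup>+g. ennreal (exp (- mu * (\<Sum>i\<in>L. (g i)\<^sup>2) + mu' * (\<Sum>i\<in>L. g i)\<^sup>2 / n)) \<partial>std_gauss_field L)
       = ennreal ((1 / sqrt (1 + 2 * mu)) ^ n / sqrt (1 - 2 * mu' / (1 + 2 * mu)))"
proof -
  define y where "y = 1 + 2 * mu"
  define \<alpha> where "\<alpha> = sqrt (2 * (mu' / n))"
  have y: "y > 0" "2 * mu' / y < 1" using pos mu' by (simp_all add: y_def)
  interpret P: prob_space "std_gauss_field L" by (rule prob_space_std_gauss_field)
  interpret G: prob_space std_gaussian by (rule prob_space_gaussian_measure) simp
  interpret pair_sigma_finite std_gaussian "std_gauss_field L"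
    by (intro pair_sigma_finite.intro G.sigma_finite_measure_axioms P.sigma_finite_measure_axioms)
  have "(\<integral>\<^sup>+g. ennreal (exp (- mu * (\<Sum>i\<in>L. (g i)\<^sup>2) + mu' * (\<Sum>i\<in>L. g i)\<^sup>2 / n)) \<partial>std_gauss_field L)
      = (\<integral>\<^sup>+z. (\<integral>\<^sup>+g. ennreal (exp (\<Sum>i\<in>L. - mu * (g i)\<^sup>2 + (\<alpha> * z) * g i)) \<partial>std_gauss_field L) \<partial>std_gaussian)"
    unfolding exp_quadratic_form_eq_nn_integral_std_gaussian[OF mu'(1)] \<alpha>_def
    by (rule Fubini') measurable
  also have "\<dots> = (\<integral>\<^sup>+z. ennreal ((1 / sqrt y) ^ n) * ennreal (exp (- (- (mu' / y)) * z\<^sup>2 + 0 * z)) \<partial>std_gaussian)"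
  proof (intro nn_integral_cong)
    fix z :: real
    have "n * \<alpha>\<^sup>2 = 2 * mu'" using mu' n by (simp add: \<alpha>_def)
    then have "n * ((\<alpha> * z)\<^sup>2 / (2 * y)) = mu' / y * z\<^sup>2"
      using y by (simp add: power_mult_distrib field_simps)
    then have "(1 / sqrt y * exp ((\<alpha> * z)\<^sup>2 / (2 * y))) ^ n = (1 / sqrt y) ^ n * exp (mu' / y * z\<^sup>2)"
      by (simp only: power_mult_distrib exp_of_nat_mult[symmetric])
    then show "(\<integral>\<^sup>+g. ennreal (exp (\<Sum>i\<in>L. - mu * (g i)\<^sup>2 + (\<alpha> * z) * g i)) \<partial>std_gauss_field L)
        = ennreal ((1 / sqrt y) ^ n) * ennreal (exp (- (- (mu' / y)) * z\<^sup>2 + 0 * z))"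
      unfolding nn_integral_std_gauss_field_exp_sum[OF fin pos] n(1) y_def[symmetric]
      using y by (simp add: ennreal_mult[symmetric])
  qed
  also have "\<dots> = ennreal ((1 / sqrt y) ^ n) * (\<integral>\<^sup>+z. ennreal (exp (- (- (mu' / y)) * z\<^sup>2 + 0 * z)) \<partial>std_gaussian)"
    by (rule nn_integral_cmult) simp
  also have "\<dots> = ennreal ((1 / sqrt y) ^ n) * ennreal (1 / sqrt (1 - 2 * mu' / y))"
    using y by (subst nn_integral_std_gaussian_exp_quadratic) simp_all
  also have "\<dots> = ennreal ((1 / sqrt y) ^ n / sqrt (1 - 2 * mu' / y))"
    using y by (simp add: ennreal_mult[symmetric])
  finally show ?thesis unfolding y_def .
qed

section \<open>Sample mean and sum of squared deviations\<close>

text \<open>In mc_measure_def, a is sample_mean \<Lambda> g and s is sqrt (sum_sq_dev \<Lambda> g).\<close>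

definition sample_mean :: "'a set \<Rightarrow> ('a \<Rightarrow> real) \<Rightarrow> real" where
  "sample_mean L g = (\<Sum>y\<in>L. g y) / card L"

definition sum_sq_dev :: "'a set \<Rightarrow> ('a \<Rightarrow> real) \<Rightarrow> real" where
  "sum_sq_dev L g = (\<Sum>y\<in>L. (g y - sample_mean L g)\<^sup>2)"

lemma borel_measurable_sample_mean [measurable]:
  "(\<lambda>g. sample_mean L g) \<in> borel_measurable (PiM L (\<lambda>_. borel))"
  unfolding sample_mean_def by measurable

lemma borel_measurable_sum_sq_dev [measurable]:
  "(\<lambda>g. sum_sq_dev L g) \<in> borel_measurable (PiM L (\<lambda>_. borel))"
  unfolding sum_sq_dev_def by measurable

lemma sum_sq_dev_nonneg: "sum_sq_dev L g \<ge> 0"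
  unfolding sum_sq_dev_def by (intro sum_nonneg) simp

lemma sum_eq_card_mult_sample_mean:
  "finite L \<Longrightarrow> L \<noteq> {} \<Longrightarrow> (\<Sum>y\<in>L. g y) = card L * sample_mean L g"
  unfolding sample_mean_def by simp

lemma sum_sq_eq_sum_sq_dev_plus:
  assumes "finite L" "L \<noteq> {}"
  shows "(\<Sum>y\<in>L. (g y - a)\<^sup>2) = sum_sq_dev L g + card L * (sample_mean L g - a)\<^sup>2"
proof -
  define b where "b = sample_mean L g"
  have "(g y - a)\<^sup>2 = (g y - b)\<^sup>2 + 2 * (b - a) * (g y - b) + (b - a)\<^sup>2" for y
    by (simp add: power2_eq_square algebra_simps)
  then have "(\<Sum>y\<in>L. (g y - a)\<^sup>2)
      = sum_sq_dev L g + 2 * (b - a) * (\<Sum>y\<in>L. g y - b) + card L * (b - a)\<^sup>2"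
    by (simp add: sum.distrib sum_distrib_left sum_sq_dev_def b_def)
  also have "(\<Sum>y\<in>L. g y - b) = 0"
    using assms by (simp add: sum_subtractf sum_eq_card_mult_sample_mean b_def)
  finally show ?thesis by (simp add: b_def)
qed

context
  fixes L :: "'a set" and x :: 'a and g :: "'a \<Rightarrow> real" and t :: real
  assumes fin: "finite L" and ne: "L \<noteq> {}" and x: "x \<notin> L"
begin

lemma sample_mean_fun_upd_insert:
  "sample_mean (insert x L) (g(x := t)) = (t + card L * sample_mean L g) / (real (card L) + 1)"
proof -
  have "(\<Sum>y\<in>L. (g(x := t)) y) = (\<Sum>y\<in>L. g y)"
    using x by (intro sum.cong) auto
  then have "sample_mean (insert x L) (g(x := t)) = (t + (\<Sum>y\<in>L. g y)) / (card L + 1)"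
    using fin x by (simp add: sample_mean_def)
  then show ?thesis
    using fin ne by (simp add: sum_eq_card_mult_sample_mean)
qed

lemma fun_upd_minus_sample_mean_insert:
  "t - sample_mean (insert x L) (g(x := t)) = real (card L) / (real (card L) + 1) * (t - sample_mean L g)"
  unfolding sample_mean_fun_upd_insert by (simp add: field_simps)

lemma sum_sq_dev_fun_upd_insert:
  "sum_sq_dev (insert x L) (g(x := t))
     = sum_sq_dev L g + real (card L) / (real (card L) + 1) * (t - sample_mean L g)\<^sup>2"
proof -
  define a where "a = sample_mean (insert x L) (g(x := t))"
  define b where "b = sample_mean L g"
  define n where "n = real (card L)"
  have "sum_sq_dev (insert x L) (g(x := t)) = (t - a)\<^sup>2 + (\<Sum>y\<in>L. ((g(x := t)) y - a)\<^sup>2)"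
    using fin x by (simp add: sum_sq_dev_def a_def)
  also have "(\<Sum>y\<in>L. ((g(x := t)) y - a)\<^sup>2) = (\<Sum>y\<in>L. (g y - a)\<^sup>2)"
    using x by (intro sum.cong) auto
  also have "\<dots> = sum_sq_dev L g + n * (b - a)\<^sup>2"
    unfolding b_def n_def using fin ne by (rule sum_sq_eq_sum_sq_dev_plus)
  also have "(t - a)\<^sup>2 + (sum_sq_dev L g + n * (b - a)\<^sup>2) = sum_sq_dev L g + n / (n + 1) * (t - b)\<^sup>2"
  proof -
    have ta: "t - a = n / (n + 1) * (t - b)" and ba: "b - a = - (t - b) / (n + 1)"
      unfolding a_def b_def n_def fun_upd_minus_sample_mean_insert
      by (simp_all add: sample_mean_fun_upd_insert field_simps)
    have "n + 1 > 0" by (simp add: n_def)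
    then show ?thesis
      unfolding ta ba power_mult_distrib power_divide
      by (simp add: field_simps power2_commute[of b t]) (simp add: algebra_simps power2_eq_square)
  qed
  finally show ?thesis unfolding b_def n_def .
qed

end

lemma AE_std_gauss_field_neq:
  assumes fin: "finite L" and y: "y \<in> L" "z \<in> L" "y \<noteq> z"
  shows "AE g in std_gauss_field L. g y \<noteq> g z"
proof -
  interpret product_sigma_finite "\<lambda>_. std_gaussian" by (rule product_sigma_finite_std_gaussian)
  define L' where "L' = L - {y}"
  have L': "L = insert y L'" "y \<notin> L'" "finite L'" "z \<in> L'"
    using fin y by (auto simp: L'_def)
  define S where "S = {g \<in> space (std_gauss_field L). g y = g z}"
  have S[measurable]: "S \<in> sets (std_gauss_field L)"
    unfolding S_def using y by measurable
  have "emeasure (std_gauss_field L) S = (\<integral>\<^sup>+g. indicator S g \<partial>PiM (insert y L') (\<lambda>_. std_gaussian))"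
    using S L'(1) by (simp add: std_gauss_field_def)
  also have "\<dots> = (\<integral>\<^sup>+g'. (\<integral>\<^sup>+t. indicator S (g'(y := t)) \<partial>std_gaussian) \<partial>PiM L' (\<lambda>_. std_gaussian))"
    using L' S by (intro product_nn_integral_insert) (auto simp: std_gauss_field_def)
  also have "\<dots> = (\<integral>\<^sup>+g'. emeasure std_gaussian {g' z} \<partial>PiM L' (\<lambda>_. std_gaussian))"
  proof (intro nn_integral_cong)
    fix g' assume "g' \<in> space (PiM L' (\<lambda>_. std_gaussian))"
    then have "g'(y := t) \<in> space (std_gauss_field L)" for t
      using L' by (auto simp: std_gauss_field_def space_PiM intro!: PiE_fun_upd)
    then have "indicator S (g'(y := t)) = (indicator {g' z} t :: ennreal)" for t
      using y by (auto simp: S_def split: split_indicator)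
    then show "(\<integral>\<^sup>+t. indicator S (g'(y := t)) \<partial>std_gaussian) = emeasure std_gaussian {g' z}"
      by simp
  qed
  also have "\<dots> = 0" by (simp add: emeasure_gaussian_measure_singleton)
  finally have "S \<in> null_sets (std_gauss_field L)" using S by (simp add: null_sets_def)
  then show ?thesis
    by (rule AE_I') (auto simp: S_def)
qed

lemma AE_std_gauss_field_sum_sq_dev_pos:
  assumes fin: "finite L" and two: "card L \<ge> 2"
  shows "AE g in std_gauss_field L. sum_sq_dev L g > 0"
proof -
  have "\<not> card L \<le> Suc 0" using two by simp
  then obtain y z where yz: "y \<in> L" "z \<in> L" "y \<noteq> z"
    using card_le_Suc0_iff_eq[OF fin] by blast
  show ?thesis
    using AE_std_gauss_field_neq[OF fin yz]
  proof eventually_elim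
    case (elim g)
    have "sum_sq_dev L g \<noteq> 0"
    proof
      assume "sum_sq_dev L g = 0"
      then have "\<forall>y\<in>L. g y = sample_mean L g"
        using fin by (simp add: sum_sq_dev_def sum_nonneg_eq_0_iff)
      then show False using elim yz by simp
    qed
    then show ?case using sum_sq_dev_nonneg[of L g] by linarith
  qed
qed

section \<open>The averaged conditional density\<close>

lemma sqrt_le_exp:
  fixes Q a :: real
  assumes Q: "Q \<ge> 0" and a: "a > 0"
  shows "sqrt Q \<le> sqrt (2 * a) * exp (Q / (4 * a))"
proof (rule real_le_lsqrt)
  have "Q / (2 * a) \<le> exp (Q / (2 * a))"
    using exp_ge_add_one_self[of "Q / (2 * a)"] by linarith
  then have "Q \<le> 2 * a * exp (Q / (2 * a))"
    using a by (simp add: field_simps)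
  also have "\<dots> = (sqrt (2 * a) * exp (Q / (4 * a)))\<^sup>2"
    using a by (simp add: power_mult_distrib exp_double[symmetric] field_simps)
  finally show "Q \<le> (sqrt (2 * a) * exp (Q / (4 * a)))\<^sup>2" .
qed (use Q a in auto)

text \<open>Q + n b^2 and n b are the sums of g^2 and of g over the sites when b and Q are the sample
  mean and the sum of squared deviations, so the bound is an exponential quadratic form in g.\<close>
lemma sqrt_mult_std_normal_density_le:
  fixes Q b w n :: real
  assumes Q: "Q \<ge> 0" and n: "n > 0"
  shows "sqrt Q * std_normal_density (b + sqrt Q * w)
    \<le> sqrt (2 * n) / sqrt (2 * pi) *
       exp (- (w\<^sup>2 / 4 - 1 / (4 * n)) * (Q + n * b\<^sup>2) + (w\<^sup>2 / 4 + 1 / (4 * n)) * (n * b)\<^sup>2 / n)"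
proof -
  have "0 \<le> (sqrt Q * w / sqrt 2 + sqrt 2 * b)\<^sup>2" by simp
  then have "- (b + sqrt Q * w)\<^sup>2 / 2 \<le> - Q * w\<^sup>2 / 4 + b\<^sup>2 / 2"
    using Q by (simp add: power2_eq_square field_simps)
  then have "sqrt Q * exp (- (b + sqrt Q * w)\<^sup>2 / 2)
      \<le> sqrt (2 * n) * exp (Q / (4 * n)) * exp (- Q * w\<^sup>2 / 4 + b\<^sup>2 / 2)"
    using sqrt_le_exp[OF Q n] n by (intro mult_mono) auto
  then have "sqrt Q * std_normal_density (b + sqrt Q * w)
      \<le> sqrt (2 * n) * exp (Q / (4 * n)) * exp (- Q * w\<^sup>2 / 4 + b\<^sup>2 / 2) / sqrt (2 * pi)"
    unfolding std_normal_density_def by (simp add: divide_right_mono)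
  also have "Q / (4 * n) + (- Q * w\<^sup>2 / 4 + b\<^sup>2 / 2)
      = - (w\<^sup>2 / 4 - 1 / (4 * n)) * (Q + n * b\<^sup>2) + (w\<^sup>2 / 4 + 1 / (4 * n)) * (n * b)\<^sup>2 / n"
    using n by (simp add: field_simps power2_eq_square)
  then have "sqrt (2 * n) * exp (Q / (4 * n)) * exp (- Q * w\<^sup>2 / 4 + b\<^sup>2 / 2) / sqrt (2 * pi)
      = sqrt (2 * n) / sqrt (2 * pi) *
        exp (- (w\<^sup>2 / 4 - 1 / (4 * n)) * (Q + n * b\<^sup>2) + (w\<^sup>2 / 4 + 1 / (4 * n)) * (n * b)\<^sup>2 / n)"
    by (simp add: mult.assoc exp_add[symmetric])
  finally show ?thesis .
qed

lemma nn_integral_std_gauss_field_kernel_le: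
  fixes w :: real and n :: nat
  assumes fin: "finite L" and n: "card L = n" "n \<ge> 2"
  shows "(\<integral>\<^sup>+g. ennreal (sqrt (sum_sq_dev L g) *
              std_normal_density (sample_mean L g + sqrt (sum_sq_dev L g) * w)) \<partial>std_gauss_field L)
    \<le> ennreal (n / sqrt (pi * (real n - 1)) * (1 / sqrt (1 + w\<^sup>2 / 2 - 1 / (2 * n))) ^ (n - 1))"
proof -
  define mu where "mu = w\<^sup>2 / 4 - 1 / (4 * n)"
  define mu' where "mu' = w\<^sup>2 / 4 + 1 / (4 * n)"
  define y where "y = 1 + w\<^sup>2 / 2 - 1 / (2 * n)"
  define C where "C = sqrt (2 * real n) / sqrt (2 * pi)"
  have L: "L \<noteq> {}" and r: "real n \<ge> 2" using n by auto
  have "1 / (2 * real n) \<le> 1 / 4" using r by (simp add: field_simps)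
  then have y_pos: "y > 0" unfolding y_def using zero_le_power2[of w] by linarith
  have y_mu: "1 + 2 * mu = y" unfolding mu_def y_def by simp
  have "1 - 2 * mu' / y = (y - 2 * mu') / y" using y_pos by (simp add: field_simps)
  also have "y - 2 * mu' = (real n - 1) / n" unfolding mu'_def y_def using r by (simp add: field_simps)
  finally have y_mu': "1 - 2 * mu' / y = (real n - 1) / (n * y)" by simp
  have mu': "mu' \<ge> 0" "2 * mu' < 1 + 2 * mu"
    unfolding mu'_def mu_def using r by (simp_all add: field_simps)
  have pointwise: "sqrt (sum_sq_dev L g) * std_normal_density (sample_mean L g + sqrt (sum_sq_dev L g) * w)
      \<le> C * exp (- mu * (\<Sum>i\<in>L. (g i)\<^sup>2) + mu' * (\<Sum>i\<in>L. g i)\<^sup>2 / n)" for g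
  proof -
    have "(\<Sum>i\<in>L. (g i)\<^sup>2) = sum_sq_dev L g + n * (sample_mean L g)\<^sup>2"
      "(\<Sum>i\<in>L. g i) = n * sample_mean L g"
      using sum_sq_eq_sum_sq_dev_plus[OF fin L, of g 0] sum_eq_card_mult_sample_mean[OF fin L] n
      by simp_all
    then show ?thesis
      using sqrt_mult_std_normal_density_le[of "sum_sq_dev L g" "real n" "sample_mean L g" w]
        sum_sq_dev_nonneg[of L g] n
      by (simp add: C_def mu_def mu'_def)
  qed
  have "(\<integral>\<^sup>+g. ennreal (sqrt (sum_sq_dev L g) *
              std_normal_density (sample_mean L g + sqrt (sum_sq_dev L g) * w)) \<partial>std_gauss_field L)
      \<le> (\<integral>\<^sup>+g. ennreal C * ennreal (exp (- mu * (\<Sum>i\<in>L. (g i)\<^sup>2) + mu' * (\<Sum>i\<in>L. g i)\<^sup>2 / n))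
           \<partial>std_gauss_field L)"
    using pointwise by (intro nn_integral_mono) (simp add: C_def ennreal_mult[symmetric] ennreal_leI)
  also have "\<dots> = ennreal C * ennreal ((1 / sqrt y) ^ n / sqrt ((real n - 1) / (n * y)))"
    using nn_integral_std_gauss_field_exp_quadratic_form[OF fin n(1) _ _ mu'] n y_mu y_mu' y_pos
    by (subst nn_integral_cmult) (simp_all add: std_gauss_field_def)
  also have "\<dots> = ennreal (n / sqrt (pi * (real n - 1)) * (1 / sqrt y) ^ (n - 1))"
  proof -
    have "(1 / sqrt y) ^ n = (1 / sqrt y) ^ (n - 1) / sqrt y" using r by (cases n) simp_all
    moreover have "real n = sqrt n * sqrt n" by simp
    ultimately have "C * ((1 / sqrt y) ^ n / sqrt ((real n - 1) / (n * y)))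
        = n / sqrt (pi * (real n - 1)) * (1 / sqrt y) ^ (n - 1)"
      unfolding C_def unfolding real_sqrt_divide real_sqrt_mult using r y_pos
      by (simp add: field_simps del: real_sqrt_mult_self)
    moreover have "C \<ge> 0" "(1 / sqrt y) ^ n / sqrt ((real n - 1) / (n * y)) \<ge> 0"
      using y_pos r by (simp_all add: C_def)
    ultimately show ?thesis by (simp only: ennreal_mult[symmetric])
  qed
  finally show ?thesis by (simp add: y_def)
qed

lemma inverse_sqrt_power_le_sqrt2:
  fixes n :: nat
  assumes n: "n \<ge> 1"
  shows "(1 / sqrt (1 - 1 / (2 * n))) ^ (n - 1) \<le> sqrt 2"
proof -
  have "1 / 2 \<le> 1 + real (n - 1) * (- 1 / (2 * n))"
    using n by (simp add: of_nat_diff field_simps)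
  also have "\<dots> \<le> (1 + - 1 / (2 * n)) ^ (n - 1)"
    using n by (intro Bernoulli_inequality) (simp add: field_simps)
  finally have "1 / 2 \<le> (1 - 1 / (2 * n)) ^ (n - 1)" by simp
  then have "1 / sqrt ((1 - 1 / (2 * n)) ^ (n - 1)) \<le> 1 / sqrt (1 / 2)"
    by (intro divide_left_mono) auto
  then show ?thesis
    by (simp add: power_one_over real_sqrt_power real_sqrt_divide)
qed

lemma inverse_sqrt_power_le_exp:
  fixes n :: nat and c v :: real
  assumes n: "n \<ge> 6" and c: "1 / 2 \<le> c" "c \<le> 1" and v: "v \<ge> 0"
  shows "(1 / sqrt (1 + v / 2)) ^ (n - 4) \<le> exp (- (n * c * v) / (16 * (1 + c * v)))"
proof -
  have "n * c * v \<le> n * v"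
    using mult_left_le[OF c(2), of "n * v"] v by (simp add: mult_ac)
  moreover have "v / 2 \<le> c * v"
    using mult_right_mono[OF c(1) v] by simp
  ultimately have "n * c * v / (16 * (1 + c * v)) \<le> n * v / (16 * (1 + v / 2))"
    using v by (intro frac_le) auto
  also have "\<dots> = n / 8 * (v / (2 + v))"
    using v by (simp add: field_simps)
  also have "\<dots> \<le> real (n - 4) / 2 * (v / (2 + v))"
    using n v by (intro mult_right_mono) (auto simp: of_nat_diff)
  also have "\<dots> \<le> real (n - 4) / 2 * ln (1 + v / 2)"
    using ln_add1_ge[of "v / 2"] v by (intro mult_left_mono) (auto simp: add.commute field_simps)
  also have "\<dots> = ln (sqrt (1 + v / 2) ^ (n - 4))"
    using v by (simp add: ln_realpow ln_sqrt)
  finally have "exp (n * c * v / (16 * (1 + c * v))) \<le> sqrt (1 + v / 2) ^ (n - 4)"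
    using v by (simp add: ln_ge_iff[symmetric])
  then have "1 / sqrt (1 + v / 2) ^ (n - 4) \<le> 1 / exp (n * c * v / (16 * (1 + c * v)))"
    by (rule divide_left_mono) (use v in auto)
  then show ?thesis
    by (simp add: exp_minus power_one_over inverse_eq_divide)
qed

lemma inverse_sqrt_power_le_gaussian:
  fixes n :: nat and c w :: real
  assumes n: "n \<ge> 6" and c: "1 / 2 \<le> c" "c \<le> 1"
  shows "(1 / sqrt (1 + w\<^sup>2 / 2 - 1 / (2 * n))) ^ (n - 1)
     \<le> 4 / sqrt (1 + c * w\<^sup>2) ^ 3 * exp (- (real n * c * w\<^sup>2) / (16 * (1 + c * w\<^sup>2)))"
proof -
  define q where "q = 1 + w\<^sup>2 / 2"
  define e where "e = 1 - 1 / (2 * real n)"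
  have r: "real n \<ge> 6" using n by simp
  have q: "q \<ge> 1" by (simp add: q_def)
  have e: "e > 0" using r by (simp add: e_def field_simps)
  have cv: "1 + c * w\<^sup>2 > 0" "1 + c * w\<^sup>2 \<le> 2 * q"
    using c mult_right_mono[OF c(2), of "w\<^sup>2"] by (auto simp: q_def add_pos_nonneg)
  have qe: "q * e \<le> 1 + w\<^sup>2 / 2 - 1 / (2 * n)"
    using q r by (simp add: q_def e_def algebra_simps)
  have y_pos: "0 < 1 + w\<^sup>2 / 2 - 1 / (2 * n)"
    using qe mult_right_mono[OF q less_imp_le[OF e]] e by linarith
  have "1 / sqrt (1 + w\<^sup>2 / 2 - 1 / (2 * n)) \<le> 1 / sqrt (q * e)"
    using qe q e y_pos by (intro divide_left_mono real_sqrt_le_mono) auto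
  then have "(1 / sqrt (1 + w\<^sup>2 / 2 - 1 / (2 * n))) ^ (n - 1) \<le> (1 / sqrt q * (1 / sqrt e)) ^ (n - 1)"
    using y_pos by (intro power_mono) (simp_all add: real_sqrt_mult)
  also have "\<dots> = (1 / sqrt q) ^ 3 * (1 / sqrt q) ^ (n - 4) * (1 / sqrt e) ^ (n - 1)"
  proof -
    have "n - 1 = 3 + (n - 4)" using n by simp
    then have "(1 / sqrt q) ^ (n - 1) = (1 / sqrt q) ^ 3 * (1 / sqrt q) ^ (n - 4)"
      by (simp only: power_add)
    then show ?thesis by (simp only: power_mult_distrib)
  qed
  also have "\<dots> \<le> (sqrt 2 / sqrt (1 + c * w\<^sup>2)) ^ 3 * exp (- (real n * c * w\<^sup>2) / (16 * (1 + c * w\<^sup>2))) * sqrt 2"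
  proof (intro mult_mono power_mono)
    show "1 / sqrt q \<le> sqrt 2 / sqrt (1 + c * w\<^sup>2)"
      using cv q by (simp add: field_simps real_sqrt_mult[symmetric])
    show "(1 / sqrt q) ^ (n - 4) \<le> exp (- (real n * c * w\<^sup>2) / (16 * (1 + c * w\<^sup>2)))"
      unfolding q_def using inverse_sqrt_power_le_exp[OF n c] by simp
    show "(1 / sqrt e) ^ (n - 1) \<le> sqrt 2"
      unfolding e_def using inverse_sqrt_power_le_sqrt2 n by simp
  qed (use q e cv in auto)
  also have "\<dots> = 4 / sqrt (1 + c * w\<^sup>2) ^ 3 * exp (- (real n * c * w\<^sup>2) / (16 * (1 + c * w\<^sup>2)))"
    by (simp add: power_divide power3_eq_cube)
  finally show ?thesis .
qed

lemma student_kernel_le_gaussian: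
  fixes n :: nat and w :: real
  assumes n: "n \<ge> 6"
  defines "c \<equiv> real n / (real n + 1)"
  shows "n / sqrt (pi * (real n - 1)) * (1 / sqrt (1 + w\<^sup>2 / 2 - 1 / (2 * n))) ^ (n - 1)
     \<le> 4 * (n / sqrt (real n + 1)) / sqrt (1 + c * w\<^sup>2) ^ 3 * exp (- (real n * c * w\<^sup>2) / (16 * (1 + c * w\<^sup>2)))"
proof -
  have r: "real n \<ge> 6" using n by simp
  have c: "1 / 2 \<le> c" "c \<le> 1" using r by (simp_all add: c_def field_simps)
  have "1 / (2 * real n) < 1" using r by (simp add: field_simps)
  then have y_pos: "0 < 1 + w\<^sup>2 / 2 - 1 / (2 * n)" using zero_le_power2[of w] by linarith
  have "3 * (real n - 1) \<le> pi * (real n - 1)"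
    using r pi_gt3 by (intro mult_right_mono) auto
  then have "n / sqrt (pi * (real n - 1)) \<le> n / sqrt (real n + 1)"
    using r by (intro divide_left_mono real_sqrt_le_mono) auto
  from mult_mono[OF this inverse_sqrt_power_le_gaussian[OF n c]] show ?thesis
    using r y_pos by (simp add: mult_ac)
qed

section \<open>Integrating out one site\<close>

lemma nn_integral_lborel_substitution_le:
  fixes h :: "real \<Rightarrow> ennreal" and \<theta> \<theta>' :: "real \<Rightarrow> real"
  assumes h[measurable]: "h \<in> borel_measurable borel"
    and deriv: "\<And>w. (\<theta> has_real_derivative \<theta>' w) (at w)"
    and cont: "continuous_on UNIV \<theta>'" and nonneg: "\<And>w. \<theta>' w \<ge> 0"
  shows "(\<integral>\<^sup>+w. h (\<theta> w) * ennreal (\<theta>' w) \<partial>lborel) \<le> (\<integral>\<^sup>+u. h u \<partial>lborel)"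
proof -
  define F where "F i w = h (\<theta> w) * ennreal (\<theta>' w) * indicator {- real (Suc i)..real (Suc i)} w" for i w
  have [measurable]: "\<theta> \<in> borel_measurable borel" "\<theta>' \<in> borel_measurable borel"
    using deriv cont by (auto intro!: borel_measurable_continuous_onI has_real_derivative_imp_continuous_on)
  have inc: "incseq F"
    by (auto simp: F_def incseq_def le_fun_def split: split_indicator)
  have sup: "(SUP i. F i w) = h (\<theta> w) * ennreal (\<theta>' w)" for w
  proof (rule antisym)
    show "(SUP i. F i w) \<le> h (\<theta> w) * ennreal (\<theta>' w)"
      by (rule SUP_least) (auto simp: F_def split: split_indicator)
    have "w \<in> {- real (Suc (nat \<lceil>\<bar>w\<bar>\<rceil>))..real (Suc (nat \<lceil>\<bar>w\<bar>\<rceil>))}"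
      by auto linarith+
    then show "h (\<theta> w) * ennreal (\<theta>' w) \<le> (SUP i. F i w)"
      by (intro SUP_upper2[where i = "nat \<lceil>\<bar>w\<bar>\<rceil>"]) (auto simp: F_def)
  qed
  have "(\<integral>\<^sup>+w. h (\<theta> w) * ennreal (\<theta>' w) \<partial>lborel) = (\<integral>\<^sup>+w. (SUP i. F i w) \<partial>lborel)"
    by (simp only: sup)
  also have "\<dots> = (SUP i. \<integral>\<^sup>+w. F i w \<partial>lborel)"
    by (rule nn_integral_monotone_convergence_SUP[OF inc]) (unfold F_def, measurable)
  also have "\<dots> \<le> (\<integral>\<^sup>+u. h u \<partial>lborel)"
  proof (rule SUP_least)
    fix i
    have "(\<integral>\<^sup>+w. F i w \<partial>lborel)
        = (\<integral>\<^sup>+u. h u * indicator {\<theta> (- real (Suc i))..\<theta> (real (Suc i))} u \<partial>lborel)"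
      unfolding F_def using deriv nonneg
      by (intro nn_integral_substitution_aux[symmetric] continuous_on_subset[OF cont]) auto
    also have "\<dots> \<le> (\<integral>\<^sup>+u. h u \<partial>lborel)"
      by (intro nn_integral_mono) (auto split: split_indicator)
    finally show "(\<integral>\<^sup>+w. F i w \<partial>lborel) \<le> (\<integral>\<^sup>+u. h u \<partial>lborel)" .
  qed
  finally show ?thesis .
qed

lemma DERIV_mult_div_sqrt_one_plus_square:
  fixes p c w :: real
  assumes c: "c \<ge> 0"
  shows "((\<lambda>w. p * w / sqrt (1 + c * w\<^sup>2)) has_real_derivative p / sqrt (1 + c * w\<^sup>2) ^ 3) (at w)"
proof -
  define s where "s = sqrt (1 + c * w\<^sup>2)"
  have pos: "1 + c * w\<^sup>2 > 0" using c by (simp add: add_pos_nonneg)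
  then have s: "s > 0" "s * s = 1 + c * w\<^sup>2" by (simp_all add: s_def)
  have "((\<lambda>w. p * w / sqrt (1 + c * w\<^sup>2)) has_real_derivative
      (p * s - p * w * (c * w / s)) / (s * s)) (at w)"
    unfolding s_def using pos
    by (auto intro!: derivative_eq_intros simp: field_simps)
  also have "(p * s - p * w * (c * w / s)) / (s * s) = p / s ^ 3"
    using s by (simp add: field_simps power3_eq_cube power2_eq_square)
  finally show ?thesis unfolding s_def .
qed

lemma nn_integral_std_gaussian_affine:
  fixes h :: "real \<Rightarrow> ennreal"
  assumes h[measurable]: "h \<in> borel_measurable borel" and Q: "Q > 0"
  shows "(\<integral>\<^sup>+t. h ((t - b) / sqrt Q) \<partial>std_gaussian)
       = (\<integral>\<^sup>+w. h w * ennreal (sqrt Q * std_normal_density (b + sqrt Q * w)) \<partial>lborel)"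
proof -
  have "(\<integral>\<^sup>+t. h ((t - b) / sqrt Q) \<partial>std_gaussian)
      = ennreal (sqrt Q) * (\<integral>\<^sup>+w. ennreal (std_normal_density (b + sqrt Q * w)) * h w \<partial>lborel)"
    using Q by (simp add: nn_integral_gaussian_measure,
        subst nn_integral_real_affine[where c = "sqrt Q" and t = b], simp_all)
  also have "\<dots> = (\<integral>\<^sup>+w. h w * ennreal (sqrt Q * std_normal_density (b + sqrt Q * w)) \<partial>lborel)"
    using Q by (subst nn_integral_cmult[symmetric]) (auto simp: ennreal_mult mult_ac)
  finally show ?thesis .
qed

text \<open>The substitution t = b + sqrt Q w is legitimate because Q > 0 almost surely.\<close>
lemma nn_integral_std_gauss_field_insert_centred:
  fixes h :: "real \<Rightarrow> ennreal" and R :: real and n :: nat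
  assumes fin: "finite L" and x: "x \<notin> L" and n: "card L = n" "n \<ge> 2"
    and h[measurable]: "h \<in> borel_measurable borel"
  defines "c \<equiv> real n / (real n + 1)"
  shows "(\<integral>\<^sup>+g. h (R * (g x - sample_mean (insert x L) g) / sqrt (sum_sq_dev (insert x L) g))
            \<partial>std_gauss_field (insert x L))
       = (\<integral>\<^sup>+g. \<integral>\<^sup>+w. h (R * c * w / sqrt (1 + c * w\<^sup>2)) *
            ennreal (sqrt (sum_sq_dev L g) * std_normal_density (sample_mean L g + sqrt (sum_sq_dev L g) * w))
            \<partial>lborel \<partial>std_gauss_field L)"
proof -
  interpret product_sigma_finite "\<lambda>_. std_gaussian" by (rule product_sigma_finite_std_gaussian)
  have L: "L \<noteq> {}" using n by auto
  have c: "c \<ge> 0" by (simp add: c_def)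
  have "(\<integral>\<^sup>+g. h (R * (g x - sample_mean (insert x L) g) / sqrt (sum_sq_dev (insert x L) g))
            \<partial>std_gauss_field (insert x L))
      = (\<integral>\<^sup>+g. \<integral>\<^sup>+t. h (R * (t - sample_mean (insert x L) (g(x := t))) / sqrt (sum_sq_dev (insert x L) (g(x := t))))
            \<partial>std_gaussian \<partial>std_gauss_field L)"
    unfolding std_gauss_field_def using fin x
    by (subst product_nn_integral_insert) (auto simp: sample_mean_def sum_sq_dev_def)
  also have "\<dots> = (\<integral>\<^sup>+g. \<integral>\<^sup>+w. h (R * c * w / sqrt (1 + c * w\<^sup>2)) *
            ennreal (sqrt (sum_sq_dev L g) * std_normal_density (sample_mean L g + sqrt (sum_sq_dev L g) * w))
            \<partial>lborel \<partial>std_gauss_field L)"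
    using AE_std_gauss_field_sum_sq_dev_pos[OF fin n(2)[folded n(1)]]
  proof (intro nn_integral_cong_AE, eventually_elim)
    case (elim g)
    define Q where "Q = sum_sq_dev L g"
    define b where "b = sample_mean L g"
    have eq: "R * (t - sample_mean (insert x L) (g(x := t))) / sqrt (sum_sq_dev (insert x L) (g(x := t)))
        = R * c * ((t - b) / sqrt Q) / sqrt (1 + c * ((t - b) / sqrt Q)\<^sup>2)" for t
    proof -
      have "sum_sq_dev (insert x L) (g(x := t)) = Q + c * (t - b)\<^sup>2"
        unfolding sum_sq_dev_fun_upd_insert[OF fin L x] Q_def b_def c_def n(1) ..
      also have "\<dots> = Q * (1 + c * ((t - b) / sqrt Q)\<^sup>2)"
        using elim by (simp add: power_divide field_simps Q_def)
      finally show ?thesis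
        unfolding fun_upd_minus_sample_mean_insert[OF fin L x] c_def[symmetric] n(1) b_def[symmetric]
        by (simp add: real_sqrt_mult)
    qed
    have "(\<lambda>w. h (R * c * w / sqrt (1 + c * w\<^sup>2))) \<in> borel_measurable borel" by measurable
    from nn_integral_std_gaussian_affine[OF this, of Q b] elim show ?case
      unfolding eq by (simp add: Q_def b_def)
  qed
  finally show ?thesis .
qed

text \<open>R c / sqrt (1 + c w^2)^3 is the derivative of R c w / sqrt (1 + c w^2), so the bound is
  in the form required by the substitution u = \<theta> w.\<close>
lemma nn_integral_std_gauss_field_kernel_le_theta:
  fixes n :: nat and s2 w :: real
  assumes fin: "finite L" and n: "card L = n" "n \<ge> 6" and s2: "s2 > 0"
  defines "c \<equiv> real n / (real n + 1)" and "R \<equiv> sqrt ((real n + 1) * s2)"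
  shows "(\<integral>\<^sup>+g. ennreal (sqrt (sum_sq_dev L g) *
              std_normal_density (sample_mean L g + sqrt (sum_sq_dev L g) * w)) \<partial>std_gauss_field L)
    \<le> ennreal (4 / sqrt s2 * (R * c / sqrt (1 + c * w\<^sup>2) ^ 3) *
        exp (- (R * c * w / sqrt (1 + c * w\<^sup>2))\<^sup>2 / (16 * s2)))"
proof -
  have pos: "1 + c * w\<^sup>2 > 0" by (simp add: c_def add_pos_nonneg)
  have Rc: "R * c / sqrt s2 = n / sqrt (real n + 1)"
  proof -
    have "R * c / sqrt s2 = sqrt (real n + 1) * c" using s2 by (simp add: R_def real_sqrt_mult)
    also have "\<dots> = (real n + 1) / sqrt (real n + 1) * c" by (simp add: real_div_sqrt)
    finally show ?thesis by (simp add: c_def)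
  qed
  moreover have "- (R * c * w / sqrt (1 + c * w\<^sup>2))\<^sup>2 / (16 * s2) = - (real n * c * w\<^sup>2) / (16 * (1 + c * w\<^sup>2))"
  proof -
    have "(real n + 1) * c\<^sup>2 = real n * c" by (simp add: c_def power2_eq_square)
    moreover have "(R * c * w / sqrt (1 + c * w\<^sup>2))\<^sup>2 = (real n + 1) * c\<^sup>2 * s2 * w\<^sup>2 / (1 + c * w\<^sup>2)"
      using s2 pos by (simp add: R_def power_divide power_mult_distrib)
    ultimately show ?thesis using s2 by (simp add: mult_ac)
  qed
  moreover have "4 / sqrt s2 * (R * c / sqrt (1 + c * w\<^sup>2) ^ 3) = 4 * (R * c / sqrt s2) / sqrt (1 + c * w\<^sup>2) ^ 3"
    by simp
  ultimately have "n / sqrt (pi * (real n - 1)) * (1 / sqrt (1 + w\<^sup>2 / 2 - 1 / (2 * n))) ^ (n - 1)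
      \<le> 4 / sqrt s2 * (R * c / sqrt (1 + c * w\<^sup>2) ^ 3) * exp (- (R * c * w / sqrt (1 + c * w\<^sup>2))\<^sup>2 / (16 * s2))"
    using student_kernel_le_gaussian[OF n(2), of w, folded c_def] by (simp only: Rc)
  with nn_integral_std_gauss_field_kernel_le[OF fin n(1)] n(2) show ?thesis
    by (auto intro: order_trans ennreal_leI)
qed

lemma nn_integral_std_gauss_field_centred_coordinate_le:
  fixes h :: "real \<Rightarrow> ennreal" and s2 :: real and n :: nat
  assumes fin: "finite L" and x: "x \<notin> L" and n: "card L = n" "n \<ge> 6" and s2: "s2 > 0"
    and h[measurable]: "h \<in> borel_measurable borel"
  shows "(\<integral>\<^sup>+g. h (sqrt ((real n + 1) * s2) * (g x - sample_mean (insert x L) g) /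
              sqrt (sum_sq_dev (insert x L) g)) \<partial>std_gauss_field (insert x L))
       \<le> ennreal (4 / sqrt s2) * (\<integral>\<^sup>+u. h u * ennreal (exp (- u\<^sup>2 / (16 * s2))) \<partial>lborel)"
proof -
  define c where "c = real n / (real n + 1)"
  define R where "R = sqrt ((real n + 1) * s2)"
  define \<theta> where "\<theta> w = R * c * w / sqrt (1 + c * w\<^sup>2)" for w
  define \<theta>' where "\<theta>' w = R * c / sqrt (1 + c * w\<^sup>2) ^ 3" for w
  define k where "k g w = ennreal (sqrt (sum_sq_dev L g) *
      std_normal_density (sample_mean L g + sqrt (sum_sq_dev L g) * w))" for g w
  have c: "c \<ge> 0" by (simp add: c_def)
  have pos: "1 + c * w\<^sup>2 > 0" for w using c by (simp add: add_pos_nonneg)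
  have \<theta>': "\<theta>' w \<ge> 0" for w
    using c s2 by (simp add: \<theta>'_def R_def add_pos_nonneg)
  interpret P: prob_space "std_gauss_field L" by (rule prob_space_std_gauss_field)
  interpret pair_sigma_finite lborel "std_gauss_field L"
    by (intro pair_sigma_finite.intro lborel.sigma_finite_measure_axioms P.sigma_finite_measure_axioms)
  have "(\<integral>\<^sup>+g. h (R * (g x - sample_mean (insert x L) g) / sqrt (sum_sq_dev (insert x L) g))
          \<partial>std_gauss_field (insert x L))
      = (\<integral>\<^sup>+g. \<integral>\<^sup>+w. h (\<theta> w) * k g w \<partial>lborel \<partial>std_gauss_field L)"
    using nn_integral_std_gauss_field_insert_centred[OF fin x n(1) _ h] n
    by (simp add: \<theta>_def k_def c_def)
  also have "\<dots> = (\<integral>\<^sup>+w. h (\<theta> w) * (\<integral>\<^sup>+g. k g w \<partial>std_gauss_field L) \<partial>lborel)"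
    unfolding k_def \<theta>_def
    by (subst Fubini') (measurable, intro nn_integral_cong nn_integral_cmult, measurable)
  also have "\<dots> \<le> (\<integral>\<^sup>+w. h (\<theta> w) * ennreal (4 / sqrt s2 * \<theta>' w * exp (- (\<theta> w)\<^sup>2 / (16 * s2))) \<partial>lborel)"
    using nn_integral_std_gauss_field_kernel_le_theta[OF fin n s2] unfolding k_def \<theta>_def \<theta>'_def c_def R_def
    by (intro nn_integral_mono mult_left_mono) simp_all
  also have "\<dots> = ennreal (4 / sqrt s2) *
      (\<integral>\<^sup>+w. (h (\<theta> w) * ennreal (exp (- (\<theta> w)\<^sup>2 / (16 * s2)))) * ennreal (\<theta>' w) \<partial>lborel)"
  proof -
    have "ennreal (4 / sqrt s2 * \<theta>' w * exp (- (\<theta> w)\<^sup>2 / (16 * s2)))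
        = ennreal (4 / sqrt s2) * (ennreal (exp (- (\<theta> w)\<^sup>2 / (16 * s2))) * ennreal (\<theta>' w))" for w
      using \<theta>'[of w] s2 by (simp add: ennreal_mult[symmetric] mult_ac)
    then show ?thesis
      by (subst nn_integral_cmult[symmetric]) (unfold \<theta>_def \<theta>'_def, measurable, simp add: mult_ac)
  qed
  also have "\<dots> \<le> ennreal (4 / sqrt s2) * (\<integral>\<^sup>+u. h u * ennreal (exp (- u\<^sup>2 / (16 * s2))) \<partial>lborel)"
    using c pos \<theta>'[unfolded \<theta>'_def] unfolding \<theta>_def \<theta>'_def
    by (intro mult_left_mono nn_integral_lborel_substitution_le DERIV_mult_div_sqrt_one_plus_square)
      (auto intro!: continuous_intros simp: less_imp_neq[OF pos, symmetric])
  finally show ?thesis unfolding R_def .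
qed

section \<open>The microcanonical marginal\<close>

lemma sets_mc_measure [measurable_cong]: "sets (mc_measure \<Lambda> m rho) = sets (PiM \<Lambda> (\<lambda>_. borel))"
  by (simp add: mc_measure_def)

lemma nn_integral_mc_measure_coordinate_le:
  fixes h :: "real \<Rightarrow> ennreal"
  assumes fin: "finite \<Lambda>" and x: "x \<in> \<Lambda>" and card: "card \<Lambda> \<ge> 7" and s2: "m\<^sup>2 < rho"
    and h[measurable]: "h \<in> borel_measurable borel"
  shows "(\<integral>\<^sup>+\<phi>. h (\<phi> x) \<partial>mc_measure \<Lambda> m rho)
       \<le> ennreal (4 / sqrt (rho - m\<^sup>2)) * (\<integral>\<^sup>+u. h (m + u) * ennreal (exp (- u\<^sup>2 / (16 * (rho - m\<^sup>2)))) \<partial>lborel)"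
proof -
  define L where "L = \<Lambda> - {x}"
  have L: "finite L" "x \<notin> L" "insert x L = \<Lambda>" "card L \<ge> 6"
    using fin x card by (auto simp: L_def)
  have N: "real (card L) + 1 = real (card \<Lambda>)"
    using L by (simp flip: L(3))
  have "(\<integral>\<^sup>+\<phi>. h (\<phi> x) \<partial>mc_measure \<Lambda> m rho)
      = (\<integral>\<^sup>+g. h (m + sqrt (real (card \<Lambda>) * (rho - m\<^sup>2)) * (g x - sample_mean \<Lambda> g) / sqrt (sum_sq_dev \<Lambda> g))
          \<partial>std_gauss_field \<Lambda>)"
    unfolding mc_measure_def Let_def using x
    by (subst nn_integral_distr) (simp_all add: std_gauss_field_def sample_mean_def sum_sq_dev_def)
  also have "\<dots> \<le> ennreal (4 / sqrt (rho - m\<^sup>2)) * (\<integral>\<^sup>+u. h (m + u) * ennreal (exp (- u\<^sup>2 / (16 * (rho - m\<^sup>2)))) \<partial>lborel)"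
    using nn_integral_std_gauss_field_centred_coordinate_le[OF L(1,2) refl L(4), of "rho - m\<^sup>2" "\<lambda>u. h (m + u)"] s2
    unfolding L(3) N by simp
  finally show ?thesis .
qed

lemma nn_integral_mc_measure_coordinate_uniform_bound:
  fixes f :: "real \<Rightarrow> real"
  assumes f: "integrable (gaussian_measure m (sqrt (8 * (rho - m\<^sup>2)))) f" and s2: "m\<^sup>2 < rho"
  obtains B where "B < \<infinity>"
    and "\<And>\<Lambda> x. finite \<Lambda> \<Longrightarrow> x \<in> \<Lambda> \<Longrightarrow> card \<Lambda> \<ge> 7 \<Longrightarrow>
          (\<integral>\<^sup>+\<phi>. ennreal \<bar>f (\<phi> x)\<bar> \<partial>mc_measure \<Lambda> m rho) \<le> B"
proof -
  note [measurable] = borel_measurable_if_integrable_gaussian[OF f]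
  define B where "B = ennreal (4 / sqrt (rho - m\<^sup>2)) *
      (\<integral>\<^sup>+u. ennreal \<bar>f (m + u)\<bar> * ennreal (exp (- u\<^sup>2 / (16 * (rho - m\<^sup>2)))) \<partial>lborel)"
  have "B < \<infinity>"
    using nn_integral_gaussian_weight_finite[OF _ f] s2 by (simp add: B_def ennreal_mult_less_top)
  moreover have "(\<integral>\<^sup>+\<phi>. ennreal \<bar>f (\<phi> x)\<bar> \<partial>mc_measure \<Lambda> m rho) \<le> B"
    if "finite \<Lambda>" "x \<in> \<Lambda>" "card \<Lambda> \<ge> 7" for \<Lambda> x
    unfolding B_def by (rule nn_integral_mc_measure_coordinate_le[OF that s2]) simp
  ultimately show ?thesis by (rule that)
qed

theorem lemma4p23:
  fixes f :: "real \<Rightarrow> real"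
    and Lam :: "nat \<Rightarrow> 'a set"
    and x :: 'a
    and m rho :: real
  assumes f_int: "\<And>mu sd. sd > 0 \<Longrightarrow> integrable (gaussian_measure mu sd) f"
    and fin: "\<And>k. finite (Lam k)"
    and card_lim: "filterlim (\<lambda>k. card (Lam k)) at_top sequentially"
    and x_in: "\<And>k. x \<in> Lam k"
    and rho_pos: "rho > 0"
    and m_range: "- sqrt rho < m" "m < sqrt rho"
  shows "(\<forall>\<^sub>F k in sequentially. integrable (mc_measure (Lam k) m rho) (\<lambda>phi. f (phi x)))
       \<and> (\<lambda>k. \<integral>phi. f (phi x) \<partial>mc_measure (Lam k) m rho) \<in> O(\<lambda>_. 1)"
proof -
  have "sqrt (m\<^sup>2) < sqrt rho"
    using m_range by (simp add: abs_less_iff)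
  then have s2: "m\<^sup>2 < rho" by (simp only: real_sqrt_less_iff)
  obtain B where "B < \<infinity>" and bound: "\<And>(\<Lambda> :: 'a set) x. finite \<Lambda> \<Longrightarrow> x \<in> \<Lambda> \<Longrightarrow> card \<Lambda> \<ge> 7 \<Longrightarrow>
      (\<integral>\<^sup>+\<phi>. ennreal \<bar>f (\<phi> x)\<bar> \<partial>mc_measure \<Lambda> m rho) \<le> B"
    using nn_integral_mc_measure_coordinate_uniform_bound[OF f_int s2] s2 by auto
  have bounded: "\<forall>\<^sub>F k in sequentially. (\<integral>\<^sup>+phi. ennreal (norm (f (phi x))) \<partial>mc_measure (Lam k) m rho) \<le> B"
    using filterlim_at_top[THEN iffD1, OF card_lim, rule_format, of 7]
    unfolding real_norm_def by eventually_elim (rule bound, simp_all add: fin x_in)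
  then have integrable: "\<forall>\<^sub>F k in sequentially. integrable (mc_measure (Lam k) m rho) (\<lambda>phi. f (phi x))"
    by eventually_elim
      (use \<open>B < \<infinity>\<close> x_in borel_measurable_if_integrable_gaussian[OF f_int[of 1 0]]
        in \<open>auto intro!: integrableI_bounded\<close>)
  have "\<forall>\<^sub>F k in sequentially. norm (\<integral>phi. f (phi x) \<partial>mc_measure (Lam k) m rho) \<le> enn2real B * norm (1::real)"
    using bounded integrable
  proof eventually_elim
    case (elim k)
    then have "ennreal (norm (\<integral>phi. f (phi x) \<partial>mc_measure (Lam k) m rho)) \<le> B"
      using integral_norm_bound_ennreal order_trans by blast
    from enn2real_mono[OF this] show ?case
      using \<open>B < \<infinity>\<close> by simp
  qed
  with integrable show ?thesis by (auto intro: bigoI)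
qed

end
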